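(* Let $G$ be an $n$-vertex graph with average degree $d>0$. Then there exist real numbers $D_1,D_2\geq d/4$ and a non-empty bipartite subgraph $G'$ of $G$ with parts $X_1$ and $X_2$ such that for every $x\in X_1$ we have $d_{G'}(x)\geq \frac{D_1}{256(\log n)^2}$ and $d_G(x)\leq D_1$, and for every $x\in X_2$ we have $d_{G'}(x)\geq \frac{D_2}{256(\log n)^2}$ and $d_G(x)\leq D_2$.
   Context: $d_F(x)$ denotes the degree of $x$ in the graph $F$; $\log$ is the natural logarithm. *)

theory Defs
  imports Complex_Main
begin

definition simple_graph :: "'a set \<Rightarrow> ('a \<Rightarrow> 'a \<Rightarrow> bool) \<Rightarrow> bool" where
  "simple_graph V E \<longleftrightarrow> finite V \<and> (\<forall>x y. E x y \<longrightarrow> x \<in> V \<and> y \<in> V)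
     \<and> (\<forall>x y. E x y \<longrightarrow> E y x) \<and> (\<forall>x. \<not> E x x)"

definition degree :: "'a set \<Rightarrow> ('a \<Rightarrow> 'a \<Rightarrow> bool) \<Rightarrow> 'a \<Rightarrow> nat" where
  "degree V E x = card {y \<in> V. E x y}"

definition avg_degree :: "'a set \<Rightarrow> ('a \<Rightarrow> 'a \<Rightarrow> bool) \<Rightarrow> real" where
  "avg_degree V E = (\<Sum>x\<in>V. real (degree V E x)) / real (card V)"

definition bipartite_subgraph ::
  "'a set \<Rightarrow> ('a \<Rightarrow> 'a \<Rightarrow> bool) \<Rightarrow> 'a set \<Rightarrow> 'a set \<Rightarrow> ('a \<Rightarrow> 'a \<Rightarrow> bool) \<Rightarrow> bool" where
  "bipartite_subgraph V E X1 X2 E' \<longleftrightarrow> X1 \<subseteq> V \<and> X2 \<subseteq> V \<and> X1 \<inter> X2 = {}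
     \<and> (\<forall>x y. E' x y \<longrightarrow> E x y)
     \<and> (\<forall>x y. E' x y \<longrightarrow> E' y x)
     \<and> (\<forall>x y. E' x y \<longrightarrow> (x \<in> X1 \<and> y \<in> X2) \<or> (x \<in> X2 \<and> y \<in> X1))"

end

theory Submission
  imports Defs
begin

text \<open>Vertices of degree below \<open>d/4\<close> meet at most half of the edges, so the remaining vertices \<open>H\<close>
  span at least half of them, and a maximum cut \<open>(T, H - T)\<close> of \<open>H\<close> keeps a quarter of those.
  Degrees in \<open>H\<close> lie between 1 and \<open>n\<close>, so each vertex falls into one of \<open>c \<approx> log\<^sub>2 n\<close> dyadic
  ranges \<open>(n/2\<^sup>i\<^sup>+\<^sup>1, n/2\<^sup>i]\<close>, and some pair of classes \<open>A \<subseteq> T\<close>, \<open>B \<subseteq> H - T\<close> carries a \<open>1/c\<^sup>2\<close>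
  fraction of the cut edges. With \<open>D\<^sub>1 = n/2\<^sup>i\<close>, \<open>D\<^sub>2 = n/2\<^sup>j\<close> and \<open>L = 256 (log n)\<^sup>2 > 16 c\<^sup>2\<close>, the
  quantity \<open>|A| D\<^sub>1 + |B| D\<^sub>2\<close> is at most twice the degree sum, hence less than \<open>L e(A, B)\<close>;
  so a subpair of \<open>(A, B)\<close> maximising \<open>e(X\<^sub>1, X\<^sub>2) - |X\<^sub>1| D\<^sub>1/L - |X\<^sub>2| D\<^sub>2/L\<close> is the required
  bipartite subgraph.\<close>

text \<open>Ordered pairs, so \<open>edges_between E V V\<close> is twice the number of edges.\<close>
definition edges_between :: "('a \<Rightarrow> 'a \<Rightarrow> bool) \<Rightarrow> 'a set \<Rightarrow> 'a set \<Rightarrow> real" where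
  "edges_between E X Y = (\<Sum>x\<in>X. \<Sum>y\<in>Y. of_bool (E x y))"

lemma edges_between_eq_sum_card:
  "finite Y \<Longrightarrow> edges_between E X Y = (\<Sum>x\<in>X. real (card {y\<in>Y. E x y}))"
  by (simp add: edges_between_def Collect_conj_eq Int_commute)

lemma edges_between_commute:
  assumes "symp E"
  shows "edges_between E X Y = edges_between E Y X"
proof -
  have "E x y = E y x" for x y using assms by (blast dest: sympD)
  then show ?thesis unfolding edges_between_def by (subst sum.swap) simp
qed

lemma edges_between_Un_left:
  "finite X \<Longrightarrow> finite X' \<Longrightarrow> X \<inter> X' = {} \<Longrightarrow>
    edges_between E (X \<union> X') Y = edges_between E X Y + edges_between E X' Y"
  by (simp add: edges_between_def sum.union_disjoint)

lemma edges_between_Un_right: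
  "finite Y \<Longrightarrow> finite Y' \<Longrightarrow> Y \<inter> Y' = {} \<Longrightarrow>
    edges_between E X (Y \<union> Y') = edges_between E X Y + edges_between E X Y'"
  by (simp add: edges_between_def sum.union_disjoint sum.distrib del: sum_of_bool_eq)

lemma edges_between_mono:
  assumes "finite X'" "finite Y'" "X \<subseteq> X'" "Y \<subseteq> Y'"
  shows "edges_between E X Y \<le> edges_between E X' Y'"
proof -
  have "edges_between E X Y \<le> edges_between E X Y'"
    unfolding edges_between_def using assms by (intro sum_mono sum_mono2) auto
  also have "\<dots> \<le> edges_between E X' Y'"
    unfolding edges_between_def using assms by (intro sum_mono2 sum_nonneg) auto
  finally show ?thesis .
qed

lemma edges_between_remove_left:
  "finite X \<Longrightarrow> finite Y \<Longrightarrow> x \<in> X \<Longrightarrow>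
    edges_between E X Y = real (card {y\<in>Y. E x y}) + edges_between E (X - {x}) Y"
  by (simp add: edges_between_eq_sum_card sum.remove)

lemma edges_between_remove_right:
  "finite X \<Longrightarrow> finite Y \<Longrightarrow> y \<in> Y \<Longrightarrow>
    edges_between E X Y = real (card {x\<in>X. E x y}) + edges_between E X (Y - {y})"
proof -
  assume fin: "finite X" "finite Y" and y: "y \<in> Y"
  have "edges_between E X Y = (\<Sum>x\<in>X. of_bool (E x y)) + edges_between E X (Y - {y})"
    unfolding edges_between_def using fin y
    by (simp add: sum.remove sum.distrib del: sum_of_bool_eq)
  then show ?thesis using fin by (simp add: Collect_conj_eq Int_commute)
qed

lemma ex_maximizer_finite:
  fixes f :: "'a \<Rightarrow> 'b::linorder"
  assumes "finite S" "S \<noteq> {}"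
  obtains x where "x \<in> S" "\<And>y. y \<in> S \<Longrightarrow> f y \<le> f x"
proof -
  have "Max (f ` S) \<in> f ` S" using assms by simp
  then obtain x where "x \<in> S" "f x = Max (f ` S)" by auto
  with assms show thesis by (intro that) auto
qed

text \<open>Take \<open>(X\<^sub>1, X\<^sub>2)\<close> maximising \<open>e(X\<^sub>1, X\<^sub>2) - a |X\<^sub>1| - b |X\<^sub>2|\<close>: the maximum is positive, and
  deleting a single vertex cannot increase it.\<close>
lemma dense_pair_contains_min_degree_subpair:
  fixes a b :: real
  assumes fin: "finite A" "finite B" and nonneg: "0 \<le> a" "0 \<le> b"
    and dense: "real (card A) * a + real (card B) * b < edges_between E A B"
  obtains X1 X2 where "X1 \<subseteq> A" "X2 \<subseteq> B" "X1 \<noteq> {}" "X2 \<noteq> {}"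
    "\<And>x. x \<in> X1 \<Longrightarrow> a \<le> real (card {y\<in>X2. E x y})"
    "\<And>y. y \<in> X2 \<Longrightarrow> b \<le> real (card {x\<in>X1. E x y})"
proof -
  define f where "f X1 X2 = edges_between E X1 X2 - real (card X1) * a - real (card X2) * b"
    for X1 X2
  have "finite (Pow A \<times> Pow B)" "Pow A \<times> Pow B \<noteq> {}" using fin by auto
  then obtain P where "P \<in> Pow A \<times> Pow B"
    and max: "\<And>Q. Q \<in> Pow A \<times> Pow B \<Longrightarrow> case_prod f Q \<le> case_prod f P"
    by (rule ex_maximizer_finite[where f = "case_prod f"]) blast
  obtain X1 X2 where P: "P = (X1, X2)" by fastforce
  with \<open>P \<in> Pow A \<times> Pow B\<close> have sub: "X1 \<subseteq> A" "X2 \<subseteq> B" by auto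
  have max': "f Y1 Y2 \<le> f X1 X2" if "Y1 \<subseteq> A" "Y2 \<subseteq> B" for Y1 Y2
    using max[of "(Y1, Y2)"] that by (simp add: P)
  have finX: "finite X1" "finite X2" using sub fin finite_subset by auto
  have "0 < f A B" using dense by (simp add: f_def)
  then have pos: "0 < f X1 X2" using max'[of A B] by simp
  show thesis
  proof (rule that[OF sub])
    have "0 \<le> real (card X1) * a" "0 \<le> real (card X2) * b" using nonneg by simp_all
    then have "f {} X2 \<le> 0" "f X1 {} \<le> 0" by (simp_all add: f_def edges_between_def)
    then show "X1 \<noteq> {}" "X2 \<noteq> {}" using pos by auto
    show "a \<le> real (card {y\<in>X2. E x y})" if x: "x \<in> X1" for x
    proof -
      have "real (card X1) * a = real (card (X1 - {x})) * a + a"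
        using card_Suc_Diff1[OF finX(1) x] by (metis of_nat_Suc distrib_right mult_1 add.commute)
      moreover have "f (X1 - {x}) X2 \<le> f X1 X2" using sub by (intro max') auto
      ultimately show ?thesis
        using edges_between_remove_left[OF finX x, of E] unfolding f_def by linarith
    qed
    show "b \<le> real (card {x\<in>X1. E x y})" if y: "y \<in> X2" for y
    proof -
      have "real (card X2) * b = real (card (X2 - {y})) * b + b"
        using card_Suc_Diff1[OF finX(2) y] by (metis of_nat_Suc distrib_right mult_1 add.commute)
      moreover have "f X1 (X2 - {y}) \<le> f X1 X2" using sub by (intro max') auto
      ultimately show ?thesis
        using edges_between_remove_right[OF finX y, of E] unfolding f_def by linarith
    qed
  qed
qed

lemma max_cut_locally_optimal:
  assumes fin: "finite C" and T: "T \<subseteq> C" "x \<in> T" and E: "symp E" "irreflp E"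
    and max: "\<And>T'. T' \<subseteq> C \<Longrightarrow> edges_between E T' (C - T') \<le> edges_between E T (C - T)"
  shows "card {y\<in>T. E x y} \<le> card {y\<in>C - T. E x y}"
proof -
  have finT: "finite T" "finite (T - {x})" "finite (C - T)" using fin T finite_subset by auto
  have other_side: "C - (T - {x}) = insert x (C - T)" using T by auto
  have "edges_between E (T - {x}) (insert x (C - T))
      = real (card {u\<in>T - {x}. E u x}) + edges_between E (T - {x}) (C - T)"
    using edges_between_remove_right[of "T - {x}" "insert x (C - T)" x E] finT T(2) by simp
  moreover have "{u\<in>T - {x}. E u x} = {y\<in>T. E x y}"
    using E by (auto dest: sympD irreflpD)
  moreover have "edges_between E T (C - T)
      = real (card {y\<in>C - T. E x y}) + edges_between E (T - {x}) (C - T)"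
    using edges_between_remove_left[OF finT(1,3) T(2)] .
  moreover have "edges_between E (T - {x}) (C - (T - {x})) \<le> edges_between E T (C - T)"
    using max T by blast
  ultimately show ?thesis unfolding other_side by simp
qed

text \<open>A maximum cut is locally optimal at every vertex, so each vertex has at least as many
  neighbours across the cut as on its own side.\<close>
lemma exists_large_cut:
  assumes fin: "finite C" and E: "symp E" "irreflp E"
  obtains T where "T \<subseteq> C" "edges_between E C C \<le> 4 * edges_between E T (C - T)"
proof -
  have "finite (Pow C)" "Pow C \<noteq> {}" using fin by auto
  then obtain T where T: "T \<in> Pow C"
    and max: "\<And>T'. T' \<in> Pow C \<Longrightarrow> edges_between E T' (C - T') \<le> edges_between E T (C - T)"
    by (rule ex_maximizer_finite[where f = "\<lambda>T. edges_between E T (C - T)"]) blast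
  have finT: "finite T" "finite (C - T)" using T fin finite_subset by auto
  have swap: "edges_between E (C - T) (C - (C - T)) = edges_between E T (C - T)"
    using T edges_between_commute[OF E(1)] by (simp add: double_diff)
  have "card {y\<in>T. E x y} \<le> card {y\<in>C - T. E x y}" if "x \<in> T" for x
    using max T that by (intro max_cut_locally_optimal[OF fin _ _ E]) auto
  then have "edges_between E T T \<le> edges_between E T (C - T)"
    unfolding edges_between_eq_sum_card[OF finT(1)] edges_between_eq_sum_card[OF finT(2)]
    by (intro sum_mono) simp
  moreover have "card {y\<in>C - T. E x y} \<le> card {y\<in>T. E x y}" if "x \<in> C - T" for x
  proof -
    have "C - (C - T) = T" using T by auto
    moreover have "card {y\<in>C - T. E x y} \<le> card {y\<in>C - (C - T). E x y}"
      using max swap that by (intro max_cut_locally_optimal[OF fin _ _ E]) auto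
    ultimately show ?thesis by simp
  qed
  then have "edges_between E (C - T) (C - T) \<le> edges_between E (C - T) T"
    unfolding edges_between_eq_sum_card[OF finT(2)] edges_between_eq_sum_card[OF finT(1)]
    by (intro sum_mono) simp
  moreover have "edges_between E C C = edges_between E T T + edges_between E T (C - T)
      + edges_between E (C - T) T + edges_between E (C - T) (C - T)"
    using edges_between_Un_left[OF finT, of E C] edges_between_Un_right[OF finT]
    using T by (simp add: Un_absorb1 Diff_partition)
  ultimately show thesis
    using that T edges_between_commute[OF E(1), of "C - T" T] by simp
qed

text \<open>For \<open>0 < m \<le> N\<close> this is the \<open>j\<close> with \<open>N / 2\<^sup>j\<^sup>+\<^sup>1 < m \<le> N / 2\<^sup>j\<close>.\<close>
definition dyadic_level :: "nat \<Rightarrow> nat \<Rightarrow> nat" where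
  "dyadic_level N m = (LEAST j. N < 2 ^ Suc j * m)"

lemma dyadic_level_bounds:
  assumes "m \<le> N" "N < 2 ^ c * m"
  shows "dyadic_level N m < c"
    and "real m \<le> real N / 2 ^ dyadic_level N m"
    and "real N / 2 ^ dyadic_level N m < 2 * real m"
proof -
  let ?j = "dyadic_level N m"
  obtain c' where c: "c = Suc c'" using assms by (cases c) auto
  then have "N < 2 ^ Suc c' * m" using assms(2) by simp
  then have "?j \<le> c'" and least: "N < 2 ^ Suc ?j * m"
    unfolding dyadic_level_def by (rule Least_le, rule LeastI)
  then show "?j < c" using c by simp
  have "real N < real (2 ^ Suc ?j * m)" using least by (simp only: of_nat_less_iff)
  then show "real N / 2 ^ ?j < 2 * real m" by (simp add: divide_less_eq algebra_simps)
  have "2 ^ ?j * m \<le> N"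
  proof (cases ?j)
    case 0 then show ?thesis using assms(1) by simp
  next
    case (Suc i)
    then have "\<not> N < 2 ^ Suc i * m" unfolding dyadic_level_def by (intro not_less_Least) simp
    then show ?thesis using Suc by simp
  qed
  then have "real (2 ^ ?j * m) \<le> real N" by (simp only: of_nat_le_iff)
  then show "real m \<le> real N / 2 ^ ?j" by (simp add: le_divide_eq mult.commute)
qed

lemma exists_dense_class_pair:
  assumes fin: "finite S" "finite R" and "0 < c" and cls: "f ` S \<subseteq> {..<c}" "g ` R \<subseteq> {..<c}"
  obtains i j where "i < c" "j < c"
    "edges_between E S R \<le> real c ^ 2 * edges_between E {x\<in>S. f x = i} {y\<in>R. g y = j}"
proof -
  let ?K = "{..<c} \<times> {..<c}"
  let ?e = "\<lambda>(i, j). edges_between E {x\<in>S. f x = i} {y\<in>R. g y = j}"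
  have "finite ?K" "?K \<noteq> {}" using \<open>0 < c\<close> by auto
  then obtain ij where ij: "ij \<in> ?K" and max: "\<And>kl. kl \<in> ?K \<Longrightarrow> ?e kl \<le> ?e ij"
    by (rule ex_maximizer_finite[where f = ?e]) blast
  have "edges_between E S R = (\<Sum>(x, y)\<in>S \<times> R. of_bool (E x y))"
    by (simp add: edges_between_def sum.cartesian_product)
  also have "\<dots> = (\<Sum>kl\<in>?K. \<Sum>(x, y)\<in>{p\<in>S \<times> R. (f (fst p), g (snd p)) = kl}. of_bool (E x y))"
    using fin cls by (intro sum.group[symmetric]) auto
  also have "\<dots> = (\<Sum>kl\<in>?K. ?e kl)"
  proof (intro sum.cong refl)
    fix kl assume "kl \<in> ?K"
    obtain k l where kl: "kl = (k, l)" by fastforce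
    have "{p\<in>S \<times> R. (f (fst p), g (snd p)) = kl} = {x\<in>S. f x = k} \<times> {y\<in>R. g y = l}"
      by (auto simp: kl)
    then show "(\<Sum>(x, y)\<in>{p\<in>S \<times> R. (f (fst p), g (snd p)) = kl}. of_bool (E x y)) = ?e kl"
      by (simp add: kl edges_between_def sum.cartesian_product)
  qed
  also have "\<dots> \<le> real (card ?K) * ?e ij"
    using max by (intro sum_bounded_above) auto
  finally show thesis
    using ij by (intro that[of "fst ij" "snd ij"]) (auto simp: power2_eq_square split: prod.splits)
qed

lemma exists_dense_dyadic_class_pair:
  fixes deg :: "'a \<Rightarrow> nat"
  assumes fin: "finite S" "finite R" and disj: "S \<inter> R = {}" and "S \<noteq> {}"
    and levels: "\<forall>x\<in>S \<union> R. deg x \<le> N \<and> N < 2 ^ c * deg x"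
  obtains A B i j where "A \<subseteq> S" "B \<subseteq> R"
    "edges_between E S R \<le> real c ^ 2 * edges_between E A B"
    "real (card A) * (real N / 2 ^ i) + real (card B) * (real N / 2 ^ j)
       \<le> 2 * (\<Sum>x\<in>S \<union> R. real (deg x))"
    "\<And>x. x \<in> A \<Longrightarrow> real (deg x) \<le> real N / 2 ^ i"
    "\<And>y. y \<in> B \<Longrightarrow> real (deg y) \<le> real N / 2 ^ j"
proof -
  define lvl where "lvl x = dyadic_level N (deg x)" for x
  note lvl_bounds =
    dyadic_level_bounds[OF levels[THEN bspec, THEN conjunct1] levels[THEN bspec, THEN conjunct2],
      folded lvl_def]
  have "0 < c" using \<open>S \<noteq> {}\<close> lvl_bounds(1) by fastforce
  then obtain i j where pair:
    "edges_between E S R \<le> real c ^ 2 * edges_between E {x\<in>S. lvl x = i} {y\<in>R. lvl y = j}"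
    using exists_dense_class_pair[OF fin, of c lvl lvl E] lvl_bounds(1) by blast
  define A where "A = {x\<in>S. lvl x = i}"
  define B where "B = {y\<in>R. lvl y = j}"
  have weight: "real (card X) * (real N / 2 ^ l) \<le> 2 * (\<Sum>x\<in>X. real (deg x))"
    if "X \<subseteq> S \<union> R" "\<And>x. x \<in> X \<Longrightarrow> lvl x = l" for X l
    using sum_bounded_below[of X "real N / 2 ^ l" "\<lambda>x. 2 * real (deg x)"] that lvl_bounds(3)
    by (force simp: sum_distrib_left)
  have "real (card A) * (real N / 2 ^ i) + real (card B) * (real N / 2 ^ j)
      \<le> 2 * (\<Sum>x\<in>A. real (deg x)) + 2 * (\<Sum>x\<in>B. real (deg x))"
    by (intro add_mono weight) (auto simp: A_def B_def)
  also have "\<dots> = 2 * (\<Sum>x\<in>A \<union> B. real (deg x))"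
    using fin disj by (simp add: A_def B_def sum.union_disjoint disjoint_iff)
  also have "\<dots> \<le> 2 * (\<Sum>x\<in>S \<union> R. real (deg x))"
    using fin by (intro mult_left_mono sum_mono2) (auto simp: A_def B_def)
  finally have cost: "real (card A) * (real N / 2 ^ i) + real (card B) * (real N / 2 ^ j)
      \<le> 2 * (\<Sum>x\<in>S \<union> R. real (deg x))" .
  show thesis
  proof (rule that[of A B i j])
    show "A \<subseteq> S" "B \<subseteq> R" by (auto simp: A_def B_def)
    show "edges_between E S R \<le> real c ^ 2 * edges_between E A B" using pair by (simp add: A_def B_def)
    show "real (deg x) \<le> real N / 2 ^ i" if "x \<in> A" for x
      using lvl_bounds(2)[of x] that by (auto simp: A_def)
    show "real (deg y) \<le> real N / 2 ^ j" if "y \<in> B" for y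
      using lvl_bounds(2)[of y] that by (auto simp: B_def)
  qed (fact cost)
qed

lemma dense_pair_contains_dyadic_core:
  fixes deg :: "'a \<Rightarrow> nat" and K L :: real
  assumes fin: "finite S" "finite R" and disj: "S \<inter> R = {}"
    and levels: "\<forall>x\<in>S \<union> R. deg x \<le> N \<and> N < 2 ^ c * deg x"
    and pos: "0 < edges_between E S R"
    and dense: "(\<Sum>x\<in>S \<union> R. real (deg x)) \<le> K * edges_between E S R"
    and L: "2 * K * real c ^ 2 < L"
  obtains X1 X2 D1 D2 where "X1 \<subseteq> S" "X2 \<subseteq> R" "X1 \<noteq> {}" "X2 \<noteq> {}"
    "\<And>x. x \<in> X1 \<Longrightarrow> D1 / L \<le> real (card {y\<in>X2. E x y}) \<and> real (deg x) \<le> D1"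
    "\<And>y. y \<in> X2 \<Longrightarrow> D2 / L \<le> real (card {x\<in>X1. E x y}) \<and> real (deg y) \<le> D2"
proof -
  have "0 \<le> K * edges_between E S R" using dense sum_nonneg[of "S \<union> R" "\<lambda>x. real (deg x)"] by simp
  then have "0 \<le> K" using pos by (simp add: zero_le_mult_iff)
  then have "0 \<le> 2 * K * real c ^ 2" by simp
  then have "0 < L" using L by linarith
  have "S \<noteq> {}" using pos by (auto simp: edges_between_def)
  obtain A B i j where AB: "A \<subseteq> S" "B \<subseteq> R"
    and pair: "edges_between E S R \<le> real c ^ 2 * edges_between E A B"
    and weight: "real (card A) * (real N / 2 ^ i) + real (card B) * (real N / 2 ^ j)
      \<le> 2 * (\<Sum>x\<in>S \<union> R. real (deg x))"
    and upper: "\<And>x. x \<in> A \<Longrightarrow> real (deg x) \<le> real N / 2 ^ i"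
      "\<And>y. y \<in> B \<Longrightarrow> real (deg y) \<le> real N / 2 ^ j"
    by (erule exists_dense_dyadic_class_pair[OF fin disj \<open>S \<noteq> {}\<close> levels])
  have "2 * (\<Sum>x\<in>S \<union> R. real (deg x)) \<le> 2 * K * (real c ^ 2 * edges_between E A B)"
    using dense mult_left_mono[OF pair \<open>0 \<le> K\<close>] by simp
  also have "\<dots> < L * edges_between E A B"
  proof -
    have "0 < real c ^ 2 * edges_between E A B" using pos pair by linarith
    then have "0 < edges_between E A B" by (simp add: zero_less_mult_iff)
    then show ?thesis using mult_strict_right_mono[OF L] by (simp add: ac_simps)
  qed
  finally have "(real (card A) * (real N / 2 ^ i) + real (card B) * (real N / 2 ^ j)) / L
      < edges_between E A B"
    using weight \<open>0 < L\<close> by (simp add: divide_less_eq mult.commute)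
  then have AB_dense: "real (card A) * (real N / 2 ^ i / L) + real (card B) * (real N / 2 ^ j / L)
      < edges_between E A B"
    by (simp add: add_divide_distrib)
  have "finite A" "finite B" using AB fin finite_subset by auto
  moreover have "0 \<le> real N / 2 ^ i / L" "0 \<le> real N / 2 ^ j / L" using \<open>0 < L\<close> by simp_all
  ultimately obtain X1 X2 where "X1 \<subseteq> A" "X2 \<subseteq> B" "X1 \<noteq> {}" "X2 \<noteq> {}"
    "\<And>x. x \<in> X1 \<Longrightarrow> real N / 2 ^ i / L \<le> real (card {y\<in>X2. E x y})"
    "\<And>y. y \<in> X2 \<Longrightarrow> real N / 2 ^ j / L \<le> real (card {x\<in>X1. E x y})"
    using dense_pair_contains_min_degree_subpair[OF _ _ _ _ AB_dense] by blast
  with AB upper show thesis by (intro that[of X1 X2 "real N / 2 ^ i" "real N / 2 ^ j"]) auto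
qed

lemma sum_degree_eq_edges_between:
  "finite V \<Longrightarrow> (\<Sum>x\<in>X. real (degree V E x)) = edges_between E X V"
  unfolding degree_def by (rule edges_between_eq_sum_card[symmetric])

lemma avg_degree_mult_card:
  "finite V \<Longrightarrow> avg_degree V E * real (card V) = edges_between E V V"
  by (simp add: avg_degree_def sum_degree_eq_edges_between edges_between_def)

lemma degree_less_card:
  assumes G: "simple_graph V E" and x: "x \<in> V"
  shows "degree V E x < card V"
proof -
  have "{y\<in>V. E x y} \<subset> V" using G x by (auto simp: simple_graph_def)
  moreover have "finite V" using G by (simp add: simple_graph_def)
  ultimately show ?thesis unfolding degree_def by (rule psubset_card_mono[rotated])
qed

lemma two_le_card_if_avg_degree_pos:
  assumes G: "simple_graph V E" and "0 < avg_degree V E"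
  shows "2 \<le> card V"
proof -
  have "\<exists>x\<in>V. degree V E x \<noteq> 0"
  proof (rule ccontr)
    assume "\<not> ?thesis"
    then have "avg_degree V E = 0" by (simp add: avg_degree_def)
    with assms(2) show False by simp
  qed
  then obtain x y where "x \<in> V" "y \<in> V" "E x y" by (force simp: degree_def card_gt_0_iff)
  moreover have "x \<noteq> y" "finite V" using \<open>E x y\<close> G by (auto simp: simple_graph_def)
  ultimately have "card {x, y} \<le> card V" by (intro card_mono) auto
  then show ?thesis using \<open>x \<noteq> y\<close> by simp
qed

lemma low_degree_vertices_carry_few_edges:
  assumes G: "simple_graph V E" and "0 \<le> t"
  defines "H \<equiv> {x\<in>V. t \<le> real (degree V E x)}"
  shows "edges_between E V V \<le> edges_between E H H + 2 * t * real (card V)"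
proof -
  have fin: "finite V" "finite H" "finite (V - H)" and sym: "symp E"
    using G by (auto simp: simple_graph_def H_def symp_def)
  have split: "H \<union> (V - H) = V" "H \<inter> (V - H) = {}" by (auto simp: H_def)
  have "edges_between E (V - H) V = (\<Sum>x\<in>V - H. real (degree V E x))"
    using sum_degree_eq_edges_between[OF fin(1)] by simp
  also have "\<dots> \<le> (\<Sum>x\<in>V - H. t)" by (intro sum_mono) (auto simp: H_def)
  also have "\<dots> \<le> t * real (card V)"
    using fin \<open>0 \<le> t\<close> by (simp add: card_mono mult.commute mult_left_mono)
  finally have low: "edges_between E (V - H) V \<le> t * real (card V)" .
  have "edges_between E H (V - H) \<le> edges_between E V (V - H)"
    using fin by (intro edges_between_mono) (auto simp: H_def)
  also have "\<dots> = edges_between E (V - H) V" by (rule edges_between_commute[OF sym])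
  finally have "edges_between E H (V - H) \<le> t * real (card V)" using low by simp
  moreover have "edges_between E V V
      = edges_between E H H + edges_between E H (V - H) + edges_between E (V - H) V"
    using edges_between_Un_left[OF fin(2,3) split(2), of E V]
      edges_between_Un_right[OF fin(2,3) split(2), of E H] unfolding split(1) by simp
  ultimately show ?thesis using low by simp
qed

lemma high_degree_vertices_contain_large_cut:
  assumes G: "simple_graph V E" and "0 < avg_degree V E"
  defines "H \<equiv> {x\<in>V. avg_degree V E / 4 \<le> real (degree V E x)}"
  obtains T where "T \<subseteq> H" "0 < edges_between E T (H - T)"
    "(\<Sum>x\<in>H. real (degree V E x)) \<le> 8 * edges_between E T (H - T)"
proof -
  have fin: "finite V" "finite H" and E: "symp E" "irreflp E"
    using G by (auto simp: simple_graph_def H_def symp_def irreflp_def)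
  have "card V \<noteq> 0"
  proof
    assume "card V = 0"
    then have "avg_degree V E = 0" by (simp add: avg_degree_def)
    with assms(2) show False by simp
  qed
  then have "0 < avg_degree V E * real (card V)" using assms(2) by simp
  then have "0 < edges_between E V V" using avg_degree_mult_card[OF fin(1), of E] by simp
  have "edges_between E V V \<le> 2 * edges_between E H H"
    using low_degree_vertices_carry_few_edges[OF G, of "avg_degree V E / 4"]
      avg_degree_mult_card[OF fin(1), of E] assms(2)
    unfolding H_def by simp
  moreover obtain T where "T \<subseteq> H" "edges_between E H H \<le> 4 * edges_between E T (H - T)"
    using exists_large_cut[OF fin(2) E] by blast
  moreover have "(\<Sum>x\<in>H. real (degree V E x)) \<le> edges_between E V V"
    unfolding sum_degree_eq_edges_between[OF fin(1), symmetric]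
    using fin by (intro sum_mono2) (auto simp: H_def)
  ultimately show thesis using that \<open>0 < edges_between E V V\<close> by simp
qed

lemma high_degrees_in_dyadic_range:
  assumes "simple_graph V E" "0 < t" "card V < 2 ^ c"
  shows "\<forall>x\<in>{x\<in>V. t \<le> real (degree V E x)}. degree V E x \<le> card V \<and> card V < 2 ^ c * degree V E x"
proof
  fix x assume x: "x \<in> {x\<in>V. t \<le> real (degree V E x)}"
  then have "degree V E x \<le> card V" using degree_less_card[OF assms(1)] by fastforce
  moreover have "1 \<le> degree V E x" using x assms(2) by simp
  then have "2 ^ c \<le> 2 ^ c * degree V E x" using mult_le_mono2[of 1 "degree V E x" "2 ^ c"] by simp
  ultimately show "degree V E x \<le> card V \<and> card V < 2 ^ c * degree V E x" using assms(3) by linarith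
qed

lemma Suc_log2_sq_less:
  assumes "2 \<le> n" "2 ^ k \<le> n"
  shows "16 * real (Suc k) ^ 2 < 256 * (ln (real n))\<^sup>2"
proof -
  have "exp (1/2 :: real) ^ 2 = exp 1" using exp_double[of "1/2 :: real"] by simp
  then have "exp (1/2 :: real) ^ 2 < 2 ^ 2" using exp_le by simp
  then have "exp (1/2 :: real) < 2" by (rule power_less_imp_less_base) simp
  then have ln2: "1/2 < ln (2 :: real)" using ln_less_cancel_iff[of "exp (1/2)" 2] by simp
  have "real k * ln 2 = ln (2 ^ k)" by (simp add: ln_realpow)
  also have "\<dots> \<le> ln (real n)"
  proof -
    have "real (2 ^ k) \<le> real n" using assms(2) by (simp only: of_nat_le_iff)
    then show ?thesis using assms(1) by (subst ln_le_cancel_iff) auto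
  qed
  finally have "real k * ln 2 \<le> ln (real n)" .
  moreover have "real k * (1/2) \<le> real k * ln 2" using ln2 by (intro mult_left_mono) auto
  moreover have "ln 2 \<le> ln (real n)" using assms(1) by simp
  ultimately have "real (Suc k) < 4 * ln (real n)" using ln2 by linarith
  then have "real (Suc k) ^ 2 < (4 * ln (real n)) ^ 2" by (intro power_strict_mono) auto
  then show ?thesis by (simp add: power_mult_distrib)
qed

definition between_edges :: "('a \<Rightarrow> 'a \<Rightarrow> bool) \<Rightarrow> 'a set \<Rightarrow> 'a set \<Rightarrow> 'a \<Rightarrow> 'a \<Rightarrow> bool" where
  "between_edges E X1 X2 x y \<longleftrightarrow> E x y \<and> (x \<in> X1 \<and> y \<in> X2 \<or> x \<in> X2 \<and> y \<in> X1)"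

lemma bipartite_subgraph_between_edges:
  "symp E \<Longrightarrow> X1 \<subseteq> V \<Longrightarrow> X2 \<subseteq> V \<Longrightarrow> X1 \<inter> X2 = {} \<Longrightarrow>
    bipartite_subgraph V E X1 X2 (between_edges E X1 X2)"
  by (auto simp: bipartite_subgraph_def between_edges_def dest: sympD)

lemma degree_between_edges:
  assumes "symp E" "X1 \<inter> X2 = {}"
  shows "x \<in> X1 \<Longrightarrow> degree (X1 \<union> X2) (between_edges E X1 X2) x = card {y\<in>X2. E x y}"
    and "y \<in> X2 \<Longrightarrow> degree (X1 \<union> X2) (between_edges E X1 X2) y = card {x\<in>X1. E x y}"
proof -
  assume "x \<in> X1"
  then have "{y\<in>X1 \<union> X2. between_edges E X1 X2 x y} = {y\<in>X2. E x y}"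
    using assms(2) by (auto simp: between_edges_def)
  then show "degree (X1 \<union> X2) (between_edges E X1 X2) x = card {y\<in>X2. E x y}"
    by (simp add: degree_def)
next
  assume "y \<in> X2"
  then have "{x\<in>X1 \<union> X2. between_edges E X1 X2 y x} = {x\<in>X1. E x y}"
    using assms by (auto simp: between_edges_def dest: sympD)
  then show "degree (X1 \<union> X2) (between_edges E X1 X2) y = card {x\<in>X1. E x y}"
    by (simp add: degree_def)
qed

theorem lemma2p3:
  fixes V :: "'a set" and E :: "'a \<Rightarrow> 'a \<Rightarrow> bool" and n :: nat and d :: real
  assumes "simple_graph V E"
    and "n = card V"
    and "d = avg_degree V E"
    and "d > 0"
  shows "\<exists>D1 D2 :: real. \<exists>X1 X2 :: 'a set. \<exists>E' :: 'a \<Rightarrow> 'a \<Rightarrow> bool.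
           D1 \<ge> d / 4 \<and> D2 \<ge> d / 4
         \<and> bipartite_subgraph V E X1 X2 E' \<and> X1 \<union> X2 \<noteq> {}
         \<and> (\<forall>x\<in>X1. real (degree (X1 \<union> X2) E' x) \<ge> D1 / (256 * (ln (real n))\<^sup>2)
                    \<and> real (degree V E x) \<le> D1)
         \<and> (\<forall>x\<in>X2. real (degree (X1 \<union> X2) E' x) \<ge> D2 / (256 * (ln (real n))\<^sup>2)
                    \<and> real (degree V E x) \<le> D2)"
proof -
  have fin: "finite V" and E: "symp E" using assms(1) by (auto simp: simple_graph_def symp_def)
  define L where "L = 256 * (ln (real n))\<^sup>2"
  define H where "H = {x\<in>V. d / 4 \<le> real (degree V E x)}"
  have "2 \<le> n" using two_le_card_if_avg_degree_pos assms by blast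
  then obtain k where k: "2 ^ k \<le> n" "n < 2 ^ Suc k" using ex_power_ivl1[of 2 n] by auto
  have L: "2 * 8 * real (Suc k) ^ 2 < L" using Suc_log2_sq_less[OF \<open>2 \<le> n\<close> k(1)] by (simp add: L_def)
  obtain T where T: "T \<subseteq> H" "0 < edges_between E T (H - T)"
    "(\<Sum>x\<in>H. real (degree V E x)) \<le> 8 * edges_between E T (H - T)"
    using high_degree_vertices_contain_large_cut[OF assms(1)] assms(3,4) unfolding H_def by blast
  have H: "T \<union> (H - T) = H" "finite T" "finite (H - T)" "T \<inter> (H - T) = {}"
    using T(1) fin finite_subset[of _ V] by (auto simp: H_def)
  have levels: "\<forall>x\<in>T \<union> (H - T). degree V E x \<le> n \<and> n < 2 ^ Suc k * degree V E x"
    using high_degrees_in_dyadic_range[OF assms(1), of "d / 4" "Suc k"] assms(2,4) k(2)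
    unfolding H(1) unfolding H_def by simp
  have dense: "(\<Sum>x\<in>T \<union> (H - T). real (degree V E x)) \<le> 8 * edges_between E T (H - T)"
    unfolding H(1) by (rule T(3))
  obtain X1 X2 D1 D2 where X: "X1 \<subseteq> T" "X2 \<subseteq> H - T" "X1 \<noteq> {}" "X2 \<noteq> {}"
    "\<And>x. x \<in> X1 \<Longrightarrow> D1 / L \<le> real (card {y\<in>X2. E x y}) \<and> real (degree V E x) \<le> D1"
    "\<And>y. y \<in> X2 \<Longrightarrow> D2 / L \<le> real (card {x\<in>X1. E x y}) \<and> real (degree V E y) \<le> D2"
    using dense_pair_contains_dyadic_core[OF H(2-4) levels T(2) dense L] by blast
  have XV: "X1 \<subseteq> V" "X2 \<subseteq> V" "X1 \<inter> X2 = {}" using X T(1) by (auto simp: H_def)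
  obtain x1 x2 where "x1 \<in> X1" "x2 \<in> X2" using X(3,4) by blast
  then have "d / 4 \<le> D1" "d / 4 \<le> D2" using X T(1) by (force simp: H_def)+
  then show ?thesis
    using bipartite_subgraph_between_edges[OF E XV] X degree_between_edges[OF E XV(3)]
    unfolding L_def
    by (intro exI[of _ D1] exI[of _ D2] exI[of _ X1] exI[of _ X2] exI[of _ "between_edges E X1 X2"]) auto
qed

end
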